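(* Let $T$ be a regular uniform-distribution-preserving transformation and let $V\sim\mathcal{U}(0,1)$ and $Z\sim\mathcal{U}(0,1)$ be independent. Then $T^\leftarrow(V,Z)\sim\mathcal{U}(0,1)$.
   Context: A function $T:[0,1]\to[0,1]$ is uniform-distribution-preserving (udp) if $T(U)\sim\mathcal{U}(0,1)$ whenever $U\sim\mathcal{U}(0,1)$. A udp transformation is regular if there is a finite partition $0=a_0<a_1<\dots<a_L=1$ such that $T$ is continuously differentiable on each $A_\ell=(a_{\ell-1},a_\ell)$, $\ell=1,\dots,L$. Let $A=\bigcup_{\ell}A_\ell$. The stochastic inverse of a regular udp transformation $T$ is defined as follows: for $x\in T(A)$, let $\{u\in A: T(u)=x\}=\{r_1(x),\dots,r_{n(x)}(x)\}$ (this set is finite and the weights below sum to one); let $G_x$ be the distribution function of the discrete random variable taking value $r_i(x)$ with probability $1/|T'(r_i(x))|$, $i=1,\dots,n(x)$, and set $T^\leftarrow(x,Z)=G_x^{-1}(Z)$, where $G^{-1}(z)=\inf\{t:G(t)\ge z\}$. For $x\notin T(A)$ set $T^\leftarrow(x,Z)=0$. *)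

theory Defs
  imports "HOL-Probability.Probability"
begin

definition U01 :: "real measure" where
  "U01 = uniform_measure lborel {0..1}"

text \<open>Uniform-distribution-preserving map T : [0,1] -> [0,1]. Values of T outside [0,1]
  are irrelevant, so we push forward the map that is T on [0,1] and 0 elsewhere.\<close>
definition udp :: "(real \<Rightarrow> real) \<Rightarrow> bool" where
  "udp T \<longleftrightarrow> (\<forall>u\<in>{0..1}. T u \<in> {0..1}) \<and>
     distr U01 borel (\<lambda>u. if u \<in> {0..1} then T u else 0) = U01"

definition regular_partition :: "(real \<Rightarrow> real) \<Rightarrow> (nat \<Rightarrow> real) \<Rightarrow> nat \<Rightarrow> bool" where
  "regular_partition T a L \<longleftrightarrow> L \<ge> 1 \<and> a 0 = 0 \<and> a L = 1 \<and>
     (\<forall>l<L. a l < a (Suc l)) \<and>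
     (\<forall>l\<in>{1..L}. T C1_differentiable_on {a (l - 1)<..<a l})"

definition regular_udp :: "(real \<Rightarrow> real) \<Rightarrow> bool" where
  "regular_udp T \<longleftrightarrow> udp T \<and> (\<exists>a L. regular_partition T a L)"

definition part_set :: "(nat \<Rightarrow> real) \<Rightarrow> nat \<Rightarrow> real set" where
  "part_set a L = (\<Union>l\<in>{1..L}. {a (l - 1)<..<a l})"

definition G_dist :: "(real \<Rightarrow> real) \<Rightarrow> (nat \<Rightarrow> real) \<Rightarrow> nat \<Rightarrow> real \<Rightarrow> real \<Rightarrow> real" where
  "G_dist T a L x t =
     (\<Sum>r\<in>{r \<in> part_set a L. T r = x \<and> r \<le> t}. 1 / \<bar>deriv T r\<bar>)"

definition stoch_inv :: "(real \<Rightarrow> real) \<Rightarrow> (nat \<Rightarrow> real) \<Rightarrow> nat \<Rightarrow> real \<Rightarrow> real \<Rightarrow> real" where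
  "stoch_inv T a L x z =
     (if x \<in> T ` part_set a L then Inf {t. G_dist T a L x t \<ge> z} else 0)"

end

theory Submission
  imports Defs
begin

text \<open>
  A measure-preserving map cannot shrink any set, so \<open>\<bar>T'\<bar> \<ge> 1\<close> on every piece of the
  partition; hence \<open>T\<close> is injective on each piece with a continuous inverse. The change of
  variables formula, applied piece by piece, gives
  \<open>\<integral>\<^sub>B G\<^sub>x(t) dx = \<lambda>{u \<in> [0,1]. u \<le> t \<and> T u \<in> B}\<close>.
  For \<open>t = 1\<close> the right-hand side is \<open>\<lambda>(B \<inter> [0,1])\<close>, so \<open>G\<^sub>x(1) = 1\<close> for almost
  every \<open>x\<close>: then \<open>G\<^sub>x\<close> is a distribution function and
  \<open>P(T\<^sup>\<leftarrow>(x,Z) \<le> t) = G\<^sub>x(t)\<close>. Integrating over \<open>x\<close> with \<open>B = [0,1]\<close> gives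
  \<open>P(T\<^sup>\<leftarrow>(V,Z) \<le> t) = \<lambda>{u \<in> [0,1]. u \<le> t}\<close>, the uniform distribution function.
\<close>

section \<open>Maps that do not shrink Lebesgue measure\<close>

lemma one_le_abs_deriv_if_nonshrinking:
  fixes T :: "real \<Rightarrow> real"
  assumes "open U" "x0 \<in> U" and deriv: "(T has_real_derivative D) (at x0)"
    and nonshrinking: "\<And>S K. S \<subseteq> U \<Longrightarrow> S \<in> sets borel \<Longrightarrow> K \<in> sets borel \<Longrightarrow> T ` S \<subseteq> K \<Longrightarrow>
      emeasure lborel S \<le> emeasure lborel K"
  shows "1 \<le> \<bar>D\<bar>"
proof (rule ccontr)
  assume "\<not> 1 \<le> \<bar>D\<bar>"
  define c where "c = (\<bar>D\<bar> + 1) / 2"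
  have c: "\<bar>D\<bar> < c" "c < 1" using \<open>\<not> 1 \<le> \<bar>D\<bar>\<close> by (auto simp: c_def)
  have "((\<lambda>y. (T y - T x0) / (y - x0)) \<longlongrightarrow> D) (at x0)"
    using deriv by (simp add: has_field_derivative_iff)
  then have "\<forall>\<^sub>F y in at x0. dist ((T y - T x0) / (y - x0)) D < c - \<bar>D\<bar>"
    using c(1) by (simp add: tendsto_iff)
  then obtain d1 where "d1 > 0"
    and d1: "\<And>y. y \<noteq> x0 \<Longrightarrow> dist y x0 < d1 \<Longrightarrow> dist ((T y - T x0) / (y - x0)) D < c - \<bar>D\<bar>"
    by (auto simp: eventually_at)
  obtain d2 where "d2 > 0" "ball x0 d2 \<subseteq> U"
    using assms(1,2) open_contains_ball by blast
  define d where "d = min d1 d2"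
  have "d > 0" using \<open>d1 > 0\<close> \<open>d2 > 0\<close> by (simp add: d_def)
  have lipschitz: "\<bar>T y - T x0\<bar> \<le> c * \<bar>y - x0\<bar>" if "dist y x0 < d" for y
  proof (cases "y = x0")
    case False
    have "\<bar>(T y - T x0) / (y - x0) - D\<bar> < c - \<bar>D\<bar>"
      using d1[OF False] that by (simp add: d_def dist_real_def)
    then have "\<bar>(T y - T x0) / (y - x0)\<bar> < c" by arith
    then show ?thesis using False by (simp add: abs_divide divide_less_eq less_imp_le)
  qed simp
  define S where "S = ball x0 d"
  define K where "K = cball (T x0) (c * d)"
  have "T ` S \<subseteq> K"
  proof
    fix x assume "x \<in> T ` S"
    then obtain y where "x = T y" "dist y x0 < d" by (auto simp: S_def dist_commute)
    moreover have "c * \<bar>y - x0\<bar> \<le> c * d"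
      using calculation c by (intro mult_left_mono) (auto simp: dist_real_def)
    ultimately show "x \<in> K"
      using lipschitz[of y] by (auto simp: K_def dist_real_def abs_minus_commute)
  qed
  moreover have "S \<subseteq> U" using \<open>ball x0 d2 \<subseteq> U\<close> by (auto simp: S_def d_def)
  ultimately have "emeasure lborel S \<le> emeasure lborel K"
    by (intro nonshrinking) (auto simp: S_def K_def)
  then have "2 * d \<le> 2 * (c * d)"
    using \<open>d > 0\<close> c by (simp add: S_def K_def emeasure_ball emeasure_cball)
  then show False using \<open>d > 0\<close> c by simp
qed

section \<open>Weighted preimages and change of variables\<close>

definition preimage_weight :: "(real \<Rightarrow> real) \<Rightarrow> real set \<Rightarrow> real \<Rightarrow> real" where
  "preimage_weight T S y = (\<Sum>r\<in>{r \<in> S. T r = y}. 1 / \<bar>deriv T r\<bar>)"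

lemma preimage_weight_nonneg: "0 \<le> preimage_weight T S y"
  unfolding preimage_weight_def by (intro sum_nonneg) simp

lemma preimage_weight_eq_0: "y \<notin> T ` S \<Longrightarrow> preimage_weight T S y = 0"
proof -
  assume "y \<notin> T ` S"
  then have fibre: "{r \<in> S. T r = y} = {}" by auto
  show ?thesis unfolding preimage_weight_def fibre by simp
qed

lemma preimage_weight_UN:
  assumes "finite F" "disjoint_family_on P F" "\<And>l. l \<in> F \<Longrightarrow> finite {r \<in> P l. T r = y}"
  shows "preimage_weight T (\<Union>l\<in>F. P l) y = (\<Sum>l\<in>F. preimage_weight T (P l) y)"
proof -
  have fibre: "{r \<in> (\<Union>l\<in>F. P l). T r = y} = (\<Union>l\<in>F. {r \<in> P l. T r = y})" by blast
  have "\<forall>i\<in>F. \<forall>j\<in>F. i \<noteq> j \<longrightarrow> {r \<in> P i. T r = y} \<inter> {r \<in> P j. T r = y} = {}"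
    using assms(2) by (auto simp: disjoint_family_on_def)
  then show ?thesis
    unfolding preimage_weight_def fibre
    using assms(1,3) by (intro sum.UNION_disjoint) auto
qed

lemma preimage_weight_mult_indicator:
  "preimage_weight T S y * indicator B y = preimage_weight T {r \<in> S. T r \<in> B} y"
proof (cases "y \<in> B")
  case True
  then have fibre: "{r \<in> {r \<in> S. T r \<in> B}. T r = y} = {r \<in> S. T r = y}" by auto
  show ?thesis using True unfolding preimage_weight_def fibre by simp
next
  case False
  then have fibre: "{r \<in> {r \<in> S. T r \<in> B}. T r = y} = {}" by auto
  show ?thesis using False unfolding preimage_weight_def fibre by simp
qed

lemma inj_on_if_deriv_nonzero:
  fixes T :: "real \<Rightarrow> real"
  assumes "is_interval U"
    and deriv: "\<And>x. x \<in> U \<Longrightarrow> (T has_real_derivative T' x) (at x)"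
    and nonzero: "\<And>x. x \<in> U \<Longrightarrow> T' x \<noteq> 0"
  shows "inj_on T U"
proof -
  have no_collision: False if "x \<in> U" "y \<in> U" "x < y" "T x = T y" for x y
  proof -
    have sub: "{x..y} \<subseteq> U" using \<open>is_interval U\<close> that unfolding is_interval_1 by fastforce
    have "continuous_on {x..y} T"
      by (intro continuous_at_imp_continuous_on ballI DERIV_isCont[OF deriv]) (use sub in blast)
    moreover have "T differentiable (at z)" if "x < z" "z < y" for z
    proof -
      have "z \<in> U" using sub that by auto
      then show ?thesis using deriv real_differentiable_def by blast
    qed
    ultimately obtain z where z: "x < z" "z < y" "(T has_real_derivative 0) (at z)"
      using Rolle[OF \<open>x < y\<close> \<open>T x = T y\<close>] by blast
    have "z \<in> U" using sub z by auto
    have "T' z = 0" using DERIV_unique[OF deriv[OF \<open>z \<in> U\<close>] z(3)] .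
    then show False using nonzero[OF \<open>z \<in> U\<close>] by contradiction
  qed
  show ?thesis
  proof (rule inj_onI, rule ccontr)
    fix x y assume "x \<in> U" "y \<in> U" "T x = T y" "x \<noteq> y"
    then show False
      using no_collision[of x y] no_collision[of y x] by (cases "x < y") auto
  qed
qed

context
  fixes T :: "real \<Rightarrow> real" and U :: "real set"
  assumes U: "open U" "is_interval U"
    and differentiable: "\<And>x. x \<in> U \<Longrightarrow> T differentiable (at x)"
    and deriv_cont: "continuous_on U (deriv T)"
    and deriv_nonzero: "\<And>x. x \<in> U \<Longrightarrow> deriv T x \<noteq> 0"
begin

private lemma has_deriv: "x \<in> U \<Longrightarrow> (T has_real_derivative deriv T x) (at x)"
  using differentiable DERIV_deriv_iff_real_differentiable by blast

private lemma cont: "continuous_on U T"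
  using has_deriv DERIV_isCont by (blast intro: continuous_at_imp_continuous_on)

private lemma inj_on_interval: "inj_on T U"
  using inj_on_if_deriv_nonzero[OF U(2) has_deriv deriv_nonzero] .

private lemma continuous_inverse:
  obtains g where "homeomorphism U (T ` U) T g"
  using homeomorphism_into_1d[OF is_interval_path_connected[OF U(2)] cont refl inj_on_interval] by blast

lemma open_image_interval: "open (T ` U)"
  using injective_into_1d_imp_open_map_UNIV[OF U(1) cont inj_on_interval order_refl] .

lemma finite_fibre_interval: "finite {r \<in> U. T r = y}"
proof -
  have "{r \<in> U. T r = y} = T -` {y} \<inter> U" by blast
  then show ?thesis using finite_vimage_IntI[OF _ inj_on_interval] by simp
qed

private lemma preimage_weight_via_inverse:
  assumes "homeomorphism U (T ` U) T g" "S \<subseteq> U"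
  shows "preimage_weight T S y = (if y \<in> T ` U \<and> g y \<in> S then 1 / \<bar>deriv T (g y)\<bar> else 0)"
proof (cases "y \<in> T ` U")
  case True
  then have "g y \<in> U" "T (g y) = y"
    using homeomorphism_image2[OF assms(1)] homeomorphism_apply2[OF assms(1)] by auto
  moreover have unique: "r = g y" if "r \<in> S" "T r = y" for r
    using that assms(2) homeomorphism_apply1[OF assms(1), of r] by auto
  ultimately have fibre: "{r \<in> S. T r = y} = (if g y \<in> S then {g y} else {})"
  proof (intro set_eqI iffI)
    fix r assume r: "r \<in> {r \<in> S. T r = y}"
    then have "r = g y" by (intro unique) auto
    with r show "r \<in> (if g y \<in> S then {g y} else {})" by simp
  next
    fix r assume "r \<in> (if g y \<in> S then {g y} else {})"
    then show "r \<in> {r \<in> S. T r = y}" using \<open>T (g y) = y\<close> by (simp split: if_splits)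
  qed
  show ?thesis using True unfolding preimage_weight_def fibre by simp
next
  case False
  then have "y \<notin> T ` S" using assms(2) by blast
  then show ?thesis using False by (simp add: preimage_weight_eq_0)
qed

lemma borel_measurable_preimage_weight_interval:
  assumes "S \<subseteq> U" "S \<in> sets borel"
  shows "preimage_weight T S \<in> borel_measurable borel"
proof -
  obtain g where g: "homeomorphism U (T ` U) T g" by (rule continuous_inverse)
  have TU: "T ` U \<in> sets borel" using open_image_interval by simp
  have g_cont: "continuous_on (T ` U) g" and g_into: "g ` (T ` U) \<subseteq> U"
    using g by (auto simp: homeomorphism_def)
  have "continuous_on (T ` U) (\<lambda>y. 1 / \<bar>deriv T (g y)\<bar>)"
    using g_into deriv_nonzero
    by (intro continuous_intros continuous_on_compose2[OF deriv_cont g_cont]) auto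
  then have weight: "(\<lambda>y. indicator (T ` U) y *\<^sub>R (1 / \<bar>deriv T (g y)\<bar>)) \<in> borel_measurable borel"
    using TU by (rule borel_measurable_continuous_on_indicator[rotated])
  have inverse: "(\<lambda>y. indicator (T ` U) y *\<^sub>R g y) \<in> borel_measurable borel"
    using borel_measurable_continuous_on_indicator[OF TU g_cont] .
  have "preimage_weight T S =
      (\<lambda>y. indicator (T ` U) y *\<^sub>R (1 / \<bar>deriv T (g y)\<bar>) * indicator S (indicator (T ` U) y *\<^sub>R g y))"
    by (auto simp: preimage_weight_via_inverse[OF g assms(1)] indicator_def)
  also have "\<dots> \<in> borel_measurable borel"
    using weight inverse assms(2) by measurable
  finally show ?thesis .
qed

lemma nn_integral_preimage_weight_interval:
  assumes "S \<subseteq> U" "S \<in> sets borel" "bounded S"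
  shows "(\<integral>\<^sup>+y. preimage_weight T S y \<partial>lborel) = emeasure lborel S"
proof -
  obtain g where g: "homeomorphism U (T ` U) T g" by (rule continuous_inverse)
  have S_lmeasurable: "S \<in> lmeasurable"
    using assms by (intro bounded_set_imp_lmeasurable) auto
  have unit: "\<bar>deriv T x\<bar> * preimage_weight T S (T x) = 1" if "x \<in> S" for x
  proof -
    have "g (T x) = x" using homeomorphism_apply1[OF g] that assms(1) by blast
    then have "preimage_weight T S (T x) = 1 / \<bar>deriv T x\<bar>"
      using that assms(1) by (auto simp: preimage_weight_via_inverse[OF g assms(1)])
    then show ?thesis using deriv_nonzero[of x] that assms(1) by auto
  qed
  have "(\<lambda>x. \<bar>deriv T x\<bar> * preimage_weight T S (T x)) absolutely_integrable_on S \<and>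
      integral S (\<lambda>x. \<bar>deriv T x\<bar> * preimage_weight T S (T x)) = measure lborel S"
  proof
    show "(\<lambda>x. \<bar>deriv T x\<bar> * preimage_weight T S (T x)) absolutely_integrable_on S"
      using absolutely_integrable_on_const[OF S_lmeasurable, of 1]
      by (rule absolutely_integrable_spike[where S="{}"]) (simp_all add: unit)
    have "integral S (\<lambda>x. \<bar>deriv T x\<bar> * preimage_weight T S (T x)) = integral S (\<lambda>x. 1)"
      by (rule integral_cong) (simp add: unit)
    also have "\<dots> = measure lborel S"
      using lmeasure_integral[OF S_lmeasurable] assms(2) by simp
    finally show "integral S (\<lambda>x. \<bar>deriv T x\<bar> * preimage_weight T S (T x)) = measure lborel S" .
  qed
  moreover have "(T has_field_derivative deriv T x) (at x within S)" if "x \<in> S" for x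
    using has_deriv[of x] that assms(1) by (auto intro: has_field_derivative_at_within)
  moreover have "S \<in> sets lebesgue" using assms(2) by simp
  ultimately have image: "preimage_weight T S absolutely_integrable_on T ` S \<and>
      integral (T ` S) (preimage_weight T S) = measure lborel S"
    using has_absolute_integral_change_of_variables_1'[of S T "deriv T" "preimage_weight T S"]
      inj_on_subset[OF inj_on_interval assms(1)]
    by blast
  have off_image: "preimage_weight T S y = indicator (T ` S) y *\<^sub>R preimage_weight T S y" for y
    by (cases "y \<in> T ` S") (simp_all add: preimage_weight_eq_0)
  have integrable: "integrable lebesgue (\<lambda>y. indicator (T ` S) y *\<^sub>R preimage_weight T S y)"
    using image by (simp add: set_integrable_def)
  have "(\<integral>\<^sup>+y. preimage_weight T S y \<partial>lborel) = (\<integral>\<^sup>+y. preimage_weight T S y \<partial>lebesgue)"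
    by (rule nn_integral_completion[symmetric])
  also have "\<dots> = (\<integral>\<^sup>+y. indicator (T ` S) y *\<^sub>R preimage_weight T S y \<partial>lebesgue)"
    by (rule nn_integral_cong) (rule arg_cong[OF off_image])
  also have "\<dots> = ennreal (\<integral>y. indicator (T ` S) y *\<^sub>R preimage_weight T S y \<partial>lebesgue)"
    by (rule nn_integral_eq_integral[OF integrable]) (simp add: preimage_weight_nonneg)
  also have "\<dots> = ennreal (measure lborel S)"
    using set_lebesgue_integral_eq_integral(2)[of "T ` S" "preimage_weight T S"] image
    unfolding set_lebesgue_integral_def set_integrable_def by simp
  also have "\<dots> = emeasure lborel S"
    using emeasure_bounded_finite[OF assms(3)] by (intro emeasure_eq_ennreal_measure[symmetric]) simp
  finally show ?thesis .
qed

end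

section \<open>Generalized inverse of a finite step distribution function\<close>

lemma Inf_step_sum_le_iff:
  fixes R :: "real set" and w F :: "real \<Rightarrow> real"
  assumes "finite R" and w: "\<And>r. r \<in> R \<Longrightarrow> 0 \<le> w r"
    and F: "\<And>s. F s = (\<Sum>r\<in>{r \<in> R. r \<le> s}. w r)"
    and "0 < z" "z \<le> F s'"
  shows "Inf {s. z \<le> F s} \<le> t \<longleftrightarrow> z \<le> F t"
proof -
  have F_mono: "F u \<le> F v" if "u \<le> v" for u v
    unfolding F using \<open>finite R\<close> that w by (intro sum_mono2) auto
  have attained: "\<exists>r\<in>R. r \<le> s \<and> z \<le> F r" if "z \<le> F s" for s
  proof -
    define Q where "Q = {r \<in> R. r \<le> s}"
    have "finite Q" using \<open>finite R\<close> by (simp add: Q_def)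
    have "Q \<noteq> {}"
    proof
      assume "Q = {}"
      then have "F s = 0" by (simp add: F Q_def[symmetric])
      then show False using that \<open>0 < z\<close> by simp
    qed
    define m where "m = Max Q"
    have "m \<in> Q" using Max_in[OF \<open>finite Q\<close> \<open>Q \<noteq> {}\<close>] by (simp add: m_def)
    have "{r \<in> R. r \<le> m} = Q"
      using \<open>m \<in> Q\<close> Max_ge[OF \<open>finite Q\<close>] by (auto simp: m_def Q_def)
    then have "F m = F s" by (simp add: F Q_def)
    then show ?thesis using \<open>m \<in> Q\<close> that by (auto simp: Q_def)
  qed
  define R' where "R' = {r \<in> R. z \<le> F r}"
  have "finite R'" using \<open>finite R\<close> by (simp add: R'_def)
  have "R' \<noteq> {}" using attained[OF \<open>z \<le> F s'\<close>] by (auto simp: R'_def)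
  define m where "m = Min R'"
  have "m \<in> R'" using Min_in[OF \<open>finite R'\<close> \<open>R' \<noteq> {}\<close>] by (simp add: m_def)
  have "z \<le> F m" using \<open>m \<in> R'\<close> by (simp add: R'_def)
  have m_le: "m \<le> s" if s: "z \<le> F s" for s
  proof -
    obtain r where "r \<in> R'" "r \<le> s" using attained[OF s] by (auto simp: R'_def)
    then show ?thesis using Min_le[OF \<open>finite R'\<close>, of r] by (simp add: m_def)
  qed
  have Inf_eq: "Inf {s. z \<le> F s} = m"
    using \<open>z \<le> F m\<close> m_le by (intro cInf_eq_minimum) auto
  show ?thesis
  proof
    assume "Inf {s. z \<le> F s} \<le> t"
    then have "m \<le> t" by (simp add: Inf_eq)
    then show "z \<le> F t" using F_mono[of m t] \<open>z \<le> F m\<close> by linarith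
  qed (simp add: Inf_eq m_le)
qed

section \<open>Regular uniform-distribution-preserving transformations\<close>

lemma sets_U01 [simp, measurable_cong]: "sets U01 = sets borel"
  and space_U01 [simp]: "space U01 = UNIV"
  by (auto simp: U01_def)

lemma emeasure_U01: "B \<in> sets borel \<Longrightarrow> emeasure U01 B = emeasure lborel (B \<inter> {0..1})"
  unfolding U01_def by (simp add: Int_commute divide_ennreal_def)

lemma prob_space_U01: "prob_space U01"
  unfolding U01_def by (rule prob_space_uniform_measure) auto

locale regular_udp_partition =
  fixes T :: "real \<Rightarrow> real" and a :: "nat \<Rightarrow> real" and L :: nat
  assumes udp: "udp T" and partition: "regular_partition T a L"
begin

definition piece :: "nat \<Rightarrow> real set" where
  "piece l = {a (l - 1)<..<a l}"

lemma a_0: "a 0 = 0" and a_L: "a L = 1" and a_Suc: "l < L \<Longrightarrow> a l < a (Suc l)"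
  and C1_piece: "l \<in> {1..L} \<Longrightarrow> T C1_differentiable_on piece l"
  using partition by (auto simp: regular_partition_def piece_def)

lemma a_strict_mono: "i < j \<Longrightarrow> j \<le> L \<Longrightarrow> a i < a j"
proof (induction j)
  case (Suc j)
  then show ?case using a_Suc[of j] by (cases "i = j") auto
qed simp

lemma a_mono: "i \<le> j \<Longrightarrow> j \<le> L \<Longrightarrow> a i \<le> a j"
  using a_strict_mono[of i j] by (cases "i = j") auto

lemma piece_subset:
  assumes "l \<in> {1..L}"
  shows "piece l \<subseteq> {0<..<1}"
proof -
  have "0 \<le> a (l - 1)" "a l \<le> 1"
    using a_mono[of 0 "l - 1"] a_mono[of l L] a_0 a_L assms by auto
  then show ?thesis by (auto simp: piece_def)
qed

lemma disjoint_family_piece: "disjoint_family_on piece {1..L}"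
proof -
  have "piece l \<inter> piece m = {}" if "l \<in> {1..L}" "m \<in> {1..L}" "l < m" for l m
  proof -
    have "a l \<le> a (m - 1)" using a_mono[of l "m - 1"] that by auto
    then show ?thesis unfolding disjoint_iff piece_def greaterThanLessThan_iff by auto
  qed
  then show ?thesis
    unfolding disjoint_family_on_def by (metis Int_commute linorder_neqE_nat)
qed

lemma part_set_eq_UN_piece: "part_set a L = (\<Union>l\<in>{1..L}. piece l)"
  by (simp add: part_set_def piece_def)

lemma part_set_subset: "part_set a L \<subseteq> {0<..<1}"
  unfolding part_set_eq_UN_piece by (rule UN_least) (rule piece_subset)

lemma open_part_set: "open (part_set a L)"
  by (auto simp: part_set_def)

lemma sets_part_set [measurable]: "part_set a L \<in> sets borel"
  using open_part_set by simp

lemma Icc_subset_part_set_Un_nodes: "{0..1} \<subseteq> part_set a L \<union> a ` {..L}"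
proof
  fix x :: real assume x: "x \<in> {0..1}"
  define K where "K = {k. k \<le> L \<and> a k \<le> x}"
  define k where "k = Max K"
  have "finite K" "0 \<in> K" using x a_0 by (auto simp: K_def)
  then have "k \<in> K" unfolding k_def using Max_in by blast
  then have k: "k \<le> L" "a k \<le> x" by (auto simp: K_def)
  have k_max: "j \<le> k" if "j \<le> L" "a j \<le> x" for j
    using Max_ge[OF \<open>finite K\<close>, of j] that by (simp add: k_def K_def)
  show "x \<in> part_set a L \<union> a ` {..L}"
  proof (cases "a k = x")
    case False
    then have "k < L" using k x a_L by (metis atLeastAtMost_iff le_neq_implies_less order.antisym)
    then have "x < a (Suc k)" using k_max[of "Suc k"] by fastforce
    then have "x \<in> piece (Suc k)" using k False by (auto simp: piece_def)
    then show ?thesis using \<open>k < L\<close> by (auto simp: part_set_eq_UN_piece)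
  qed (use k in auto)
qed

lemma has_real_derivative_piece:
  assumes "l \<in> {1..L}" "x \<in> piece l"
  shows "(T has_real_derivative deriv T x) (at x)"
proof -
  have "T differentiable (at x)"
    using C1_piece[OF assms(1)] assms(2) unfolding C1_differentiable_on_eq by blast
  then show ?thesis by (rule DERIV_deriv_iff_real_differentiable[THEN iffD2])
qed

lemma continuous_on_deriv_piece: "l \<in> {1..L} \<Longrightarrow> continuous_on (piece l) (deriv T)"
proof -
  assume l: "l \<in> {1..L}"
  have "continuous_on (piece l) (\<lambda>x. vector_derivative T (at x))"
    using C1_piece[OF l] unfolding C1_differentiable_on_eq by blast
  then show ?thesis
  proof (rule continuous_on_eq)
    fix x assume "x \<in> piece l"
    then have "(T has_vector_derivative deriv T x) (at x)"
      using has_real_derivative_piece[OF l] has_real_derivative_iff_has_vector_derivative by blast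
    then show "vector_derivative T (at x) = deriv T x" by (rule vector_derivative_at)
  qed
qed

lemma has_real_derivative_part_set:
  "x \<in> part_set a L \<Longrightarrow> (T has_real_derivative deriv T x) (at x)"
  unfolding part_set_eq_UN_piece using has_real_derivative_piece by blast

lemma borel_measurable_T_on_Icc:
  "(\<lambda>u. if u \<in> {0..1} then T u else 0) \<in> borel_measurable borel"
proof (rule measurable_discrete_difference)
  have "continuous_on (part_set a L) T"
    using has_real_derivative_part_set DERIV_isCont by (blast intro: continuous_at_imp_continuous_on)
  then show "(\<lambda>u. indicator (part_set a L) u *\<^sub>R T u) \<in> borel_measurable borel"
    using open_part_set by (intro borel_measurable_continuous_on_indicator) auto
  show "countable (a ` {..L})" by simp
  show "indicator (part_set a L) u *\<^sub>R T u = (if u \<in> {0..1} then T u else 0)"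
    if "u \<notin> a ` {..L}" for u
    using that Icc_subset_part_set_Un_nodes part_set_subset by (auto simp: indicator_def)
qed auto

lemma sets_preimage_Icc: "B \<in> sets borel \<Longrightarrow> {u \<in> {0..1}. T u \<in> B} \<in> sets borel"
proof -
  assume "B \<in> sets borel"
  then have "(\<lambda>u. if u \<in> {0..1} then T u else 0) -` B \<inter> {0..1} \<in> sets borel"
    using measurable_sets_borel[OF borel_measurable_T_on_Icc] by auto
  moreover have "(\<lambda>u. if u \<in> {0..1} then T u else 0) -` B \<inter> {0..1} = {u \<in> {0..1}. T u \<in> B}"
    by auto
  ultimately show ?thesis by simp
qed

lemma emeasure_preimage_Icc:
  assumes "B \<in> sets borel"
  shows "emeasure lborel {u \<in> {0..1}. T u \<in> B} = emeasure lborel (B \<inter> {0..1})"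
proof -
  let ?T = "\<lambda>u. if u \<in> {0..1} then T u else 0"
  have "?T -` B \<inter> {0..1} = {u \<in> {0..1}. T u \<in> B}" by auto
  then have "emeasure lborel {u \<in> {0..1}. T u \<in> B} = emeasure U01 (?T -` B)"
    using measurable_sets_borel[OF borel_measurable_T_on_Icc assms] by (simp add: emeasure_U01)
  also have "\<dots> = emeasure (distr U01 borel ?T) B"
    using assms borel_measurable_T_on_Icc by (simp add: emeasure_distr)
  also have "\<dots> = emeasure U01 B"
    using udp by (simp add: udp_def)
  finally show ?thesis using assms by (simp add: emeasure_U01)
qed

lemma emeasure_part_set_eq_Icc:
  assumes "{u \<in> part_set a L. P u} \<in> sets borel" "{u \<in> {0..1}. P u} \<in> sets borel"
  shows "emeasure lborel {u \<in> part_set a L. P u} = emeasure lborel {u \<in> {0..1}. P u}"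
proof (rule emeasure_eq_AE)
  have "AE u in lborel. u \<notin> a ` {..L}"
    by (intro AE_not_in finite_imp_null_set_lborel) simp
  then show "AE u in lborel. u \<in> {u \<in> part_set a L. P u} \<longleftrightarrow> u \<in> {u \<in> {0..1}. P u}"
    by eventually_elim (use Icc_subset_part_set_Un_nodes part_set_subset in auto)
qed (use assms in auto)

lemma one_le_abs_deriv: "x \<in> part_set a L \<Longrightarrow> 1 \<le> \<bar>deriv T x\<bar>"
proof (rule one_le_abs_deriv_if_nonshrinking[OF open_part_set _ has_real_derivative_part_set])
  fix S K assume S: "S \<subseteq> part_set a L" "S \<in> sets borel" and K: "K \<in> sets borel" "T ` S \<subseteq> K"
  have "S \<subseteq> {u \<in> {0..1}. T u \<in> K}" using S K part_set_subset by auto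
  then have "emeasure lborel S \<le> emeasure lborel {u \<in> {0..1}. T u \<in> K}"
    using sets_preimage_Icc[OF K(1)] by (intro emeasure_mono) auto
  also have "\<dots> = emeasure lborel (K \<inter> {0..1})" by (rule emeasure_preimage_Icc[OF K(1)])
  also have "\<dots> \<le> emeasure lborel K" using K(1) by (intro emeasure_mono) auto
  finally show "emeasure lborel S \<le> emeasure lborel K" .
qed

lemma piece_regular:
  assumes "l \<in> {1..L}"
  shows "open (piece l)" "is_interval (piece l)"
    "\<And>x. x \<in> piece l \<Longrightarrow> T differentiable (at x)"
    "continuous_on (piece l) (deriv T)"
    "\<And>x. x \<in> piece l \<Longrightarrow> deriv T x \<noteq> 0"
proof -
  show "open (piece l)" "is_interval (piece l)" by (auto simp: piece_def is_interval_1)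
  show "T differentiable (at x)" if "x \<in> piece l" for x
    using has_real_derivative_piece[OF assms that] real_differentiable_def by blast
  show "continuous_on (piece l) (deriv T)" by (rule continuous_on_deriv_piece[OF assms])
  show "deriv T x \<noteq> 0" if "x \<in> piece l" for x
  proof -
    have "x \<in> part_set a L" using that assms unfolding part_set_eq_UN_piece by blast
    then show ?thesis using one_le_abs_deriv by fastforce
  qed
qed

lemma finite_fibre: "finite {r \<in> part_set a L. T r = y}"
proof -
  have "{r \<in> part_set a L. T r = y} = (\<Union>l\<in>{1..L}. {r \<in> piece l. T r = y})"
    by (auto simp: part_set_eq_UN_piece)
  then show ?thesis using finite_fibre_interval[OF piece_regular] by simp
qed

lemma preimage_weight_part_set:
  assumes "S \<subseteq> part_set a L"
  shows "preimage_weight T S y = (\<Sum>l\<in>{1..L}. preimage_weight T (S \<inter> piece l) y)"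
proof -
  have S: "(\<Union>l\<in>{1..L}. S \<inter> piece l) = S" using assms by (auto simp: part_set_eq_UN_piece)
  have "preimage_weight T (\<Union>l\<in>{1..L}. S \<inter> piece l) y = (\<Sum>l\<in>{1..L}. preimage_weight T (S \<inter> piece l) y)"
  proof (rule preimage_weight_UN)
    show "disjoint_family_on (\<lambda>l. S \<inter> piece l) {1..L}"
      using disjoint_family_piece by (auto simp: disjoint_family_on_def)
    show "finite {r \<in> S \<inter> piece l. T r = y}" if "l \<in> {1..L}" for l
      using finite_fibre_interval[OF piece_regular[OF that], where y = y]
      by (rule rev_finite_subset) auto
  qed simp
  then show ?thesis unfolding S .
qed

lemma borel_measurable_preimage_weight:
  assumes "S \<subseteq> part_set a L" "S \<in> sets borel"
  shows "preimage_weight T S \<in> borel_measurable borel"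
proof -
  have "preimage_weight T S = (\<lambda>y. \<Sum>l\<in>{1..L}. preimage_weight T (S \<inter> piece l) y)"
    using preimage_weight_part_set[OF assms(1)] by blast
  also have "\<dots> \<in> borel_measurable borel"
    using assms(2) piece_regular(1)
    by (intro borel_measurable_sum borel_measurable_preimage_weight_interval[OF piece_regular]) auto
  finally show ?thesis .
qed

lemma nn_integral_preimage_weight:
  assumes "S \<subseteq> part_set a L" "S \<in> sets borel"
  shows "(\<integral>\<^sup>+y. preimage_weight T S y \<partial>lborel) = emeasure lborel S"
proof -
  have pieces: "S \<inter> piece l \<subseteq> piece l" "S \<inter> piece l \<in> sets borel" "bounded (S \<inter> piece l)"
    if "l \<in> {1..L}" for l
  proof -
    show "S \<inter> piece l \<subseteq> piece l" by blast
    show "S \<inter> piece l \<in> sets borel" using assms(2) piece_regular(1)[OF that] by simp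
    show "bounded (S \<inter> piece l)"
      using piece_subset[OF that] by (intro bounded_subset[OF bounded_Ioo]) auto
  qed
  have "(\<integral>\<^sup>+y. preimage_weight T S y \<partial>lborel) =
      (\<integral>\<^sup>+y. (\<Sum>l\<in>{1..L}. ennreal (preimage_weight T (S \<inter> piece l) y)) \<partial>lborel)"
    by (intro nn_integral_cong)
      (simp add: preimage_weight_part_set[OF assms(1)] sum_ennreal preimage_weight_nonneg)
  also have "\<dots> = (\<Sum>l\<in>{1..L}. \<integral>\<^sup>+y. preimage_weight T (S \<inter> piece l) y \<partial>lborel)"
    using borel_measurable_preimage_weight_interval[OF piece_regular pieces(1,2)]
    by (intro nn_integral_sum) auto
  also have "\<dots> = (\<Sum>l\<in>{1..L}. emeasure lborel (S \<inter> piece l))"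
    using nn_integral_preimage_weight_interval[OF piece_regular pieces] by simp
  also have "\<dots> = emeasure lborel S"
    using assms disjoint_family_piece piece_regular(1)
    by (intro sum_emeasure_cover[symmetric]) (auto simp: part_set_eq_UN_piece)
  finally show ?thesis .
qed

lemma G_dist_eq_preimage_weight: "G_dist T a L x t = preimage_weight T {r \<in> part_set a L. r \<le> t} x"
  unfolding G_dist_def preimage_weight_def by (rule sum.cong) auto

lemma G_dist_nonneg: "0 \<le> G_dist T a L x t"
  by (simp add: G_dist_eq_preimage_weight preimage_weight_nonneg)

lemma G_dist_le_G_dist_1: "G_dist T a L x t \<le> G_dist T a L x 1"
proof -
  have "{r \<in> part_set a L. T r = x \<and> r \<le> 1} = {r \<in> part_set a L. T r = x}"
    using part_set_subset by auto
  then show ?thesis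
    unfolding G_dist_def using finite_fibre[of x] by (intro sum_mono2) auto
qed

lemma image_part_set_if_G_dist: "G_dist T a L x t \<noteq> 0 \<Longrightarrow> x \<in> T ` part_set a L"
  using preimage_weight_eq_0[of x T "{r \<in> part_set a L. r \<le> t}"]
  by (auto simp: G_dist_eq_preimage_weight)

lemma borel_measurable_G_dist [measurable]: "(\<lambda>x. G_dist T a L x t) \<in> borel_measurable borel"
  unfolding G_dist_eq_preimage_weight by (rule borel_measurable_preimage_weight) auto

lemma nn_integral_G_dist:
  assumes "B \<in> sets borel"
  shows "(\<integral>\<^sup>+x. ennreal (G_dist T a L x t) * indicator B x \<partial>lborel) =
    emeasure lborel {u \<in> {0..1}. u \<le> t \<and> T u \<in> B}"
proof -
  define S where "S = {r \<in> part_set a L. r \<le> t \<and> T r \<in> B}"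
  have S_eq: "S = part_set a L \<inter> {..t} \<inter> {u \<in> {0..1}. T u \<in> B}"
    using part_set_subset by (auto simp: S_def)
  have S: "S \<subseteq> part_set a L" "S \<in> sets borel"
    using sets_preimage_Icc[OF assms] by (auto simp: S_eq)
  have "ennreal (G_dist T a L x t) * indicator B x = ennreal (preimage_weight T S x)" for x
  proof -
    have "G_dist T a L x t * indicator B x = preimage_weight T S x"
      unfolding G_dist_eq_preimage_weight preimage_weight_mult_indicator S_def
      by (simp add: conj_assoc)
    then show ?thesis by (cases "x \<in> B") auto
  qed
  then have "(\<integral>\<^sup>+x. ennreal (G_dist T a L x t) * indicator B x \<partial>lborel) =
      (\<integral>\<^sup>+x. preimage_weight T S x \<partial>lborel)"
    by simp
  also have "\<dots> = emeasure lborel S" by (rule nn_integral_preimage_weight[OF S])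
  also have "\<dots> = emeasure lborel {u \<in> {0..1}. u \<le> t \<and> T u \<in> B}"
  proof -
    have "{u \<in> {0..1}. u \<le> t \<and> T u \<in> B} = {..t} \<inter> {u \<in> {0..1}. T u \<in> B}" by auto
    then show ?thesis
      unfolding S_def using S sets_preimage_Icc[OF assms]
      by (intro emeasure_part_set_eq_Icc) (auto simp: S_def)
  qed
  finally show ?thesis .
qed

lemma AE_G_dist_1: "AE x in U01. G_dist T a L x 1 = 1"
proof -
  have "AE x in lborel. ennreal (G_dist T a L x 1) = indicator {0..1} x"
  proof (rule sigma_finite_measure.density_unique2[OF sigma_finite_lborel])
    fix B :: "real set" assume B: "B \<in> sets lborel"
    have "(\<integral>\<^sup>+x\<in>B. ennreal (G_dist T a L x 1) \<partial>lborel) = emeasure lborel {u \<in> {0..1}. T u \<in> B}"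
      using nn_integral_G_dist[of B 1] B by simp
    also have "\<dots> = emeasure lborel (B \<inter> {0..1})"
      using B by (intro emeasure_preimage_Icc) simp
    also have "\<dots> = (\<integral>\<^sup>+x\<in>B. indicator {0..1} x \<partial>lborel)"
      using B by (simp add: nn_integral_indicator[symmetric] indicator_inter_arith mult.commute)
    finally show "(\<integral>\<^sup>+x\<in>B. ennreal (G_dist T a L x 1) \<partial>lborel) = (\<integral>\<^sup>+x\<in>B. indicator {0..1} x \<partial>lborel)" .
  qed auto
  then show ?thesis
    unfolding U01_def by (intro AE_uniform_measureI) (auto elim!: eventually_mono)
qed

text \<open>\<open>Inf UNIV\<close> and \<open>Inf {}\<close> are unspecified reals; they only occur for \<open>z\<close> outside
  \<open>(0, G\<^sub>x(1)]\<close>, which is a null set of \<open>z \<in> [0,1]\<close> once \<open>G\<^sub>x(1) = 1\<close>.\<close>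

lemma stoch_inv_le_iff:
  assumes "x \<in> T ` part_set a L"
  shows "stoch_inv T a L x z \<le> t \<longleftrightarrow>
    (if z \<le> 0 then Inf UNIV \<le> t
     else if z \<le> G_dist T a L x 1 then z \<le> G_dist T a L x t
     else Inf {} \<le> t)"
proof -
  let ?G = "G_dist T a L x"
  have stoch_inv: "stoch_inv T a L x z = Inf {s. z \<le> ?G s}"
    using assms by (simp add: stoch_inv_def)
  consider "z \<le> 0" | "0 < z" "z \<le> ?G 1" | "?G 1 < z" by linarith
  then show ?thesis
  proof cases
    case 1
    then have "{s. z \<le> ?G s} = UNIV" using G_dist_nonneg[of x] by (auto intro: order_trans)
    then show ?thesis using 1 by (simp add: stoch_inv)
  next
    case 2
    have "?G s = (\<Sum>r\<in>{r \<in> {r \<in> part_set a L. T r = x}. r \<le> s}. 1 / \<bar>deriv T r\<bar>)" for s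
      unfolding G_dist_def by (rule sum.cong) auto
    then have "Inf {s. z \<le> ?G s} \<le> t \<longleftrightarrow> z \<le> ?G t"
      using finite_fibre 2
      by (intro Inf_step_sum_le_iff[where R = "{r \<in> part_set a L. T r = x}" and s' = 1]) auto
    then show ?thesis using 2 by (simp add: stoch_inv)
  next
    case 3
    then have "{s. z \<le> ?G s} = {}"
      using G_dist_le_G_dist_1[of x] by (auto simp: not_le intro: le_less_trans)
    moreover have "\<not> z \<le> 0" using 3 G_dist_nonneg[of x 1] by simp
    ultimately show ?thesis using 3 by (simp add: stoch_inv)
  qed
qed

lemma sets_image_part_set [measurable]: "T ` part_set a L \<in> sets borel"
proof -
  have "open (T ` piece l)" if "l \<in> {1..L}" for l
    by (rule open_image_interval[OF piece_regular[OF that]])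
  then have "open (T ` part_set a L)"
    unfolding part_set_eq_UN_piece image_UN by blast
  then show ?thesis by simp
qed

lemma borel_measurable_stoch_inv:
  "(\<lambda>p. stoch_inv T a L (fst p) (snd p)) \<in> borel_measurable (borel \<Otimes>\<^sub>M borel)"
  unfolding borel_measurable_iff_le
proof
  fix t
  let ?A = "T ` part_set a L"
  have "{p \<in> space (borel \<Otimes>\<^sub>M borel). stoch_inv T a L (fst p) (snd p) \<le> t} =
    {p \<in> space (borel \<Otimes>\<^sub>M borel).
      if fst p \<in> ?A then
        (if snd p \<le> 0 then Inf UNIV \<le> t
         else if snd p \<le> G_dist T a L (fst p) 1 then snd p \<le> G_dist T a L (fst p) t
         else Inf {} \<le> t)
      else 0 \<le> t}"
    using stoch_inv_le_iff by (auto simp: stoch_inv_def)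
  also have "\<dots> \<in> sets (borel \<Otimes>\<^sub>M borel)" by measurable
  finally show "{p \<in> space (borel \<Otimes>\<^sub>M borel). stoch_inv T a L (fst p) (snd p) \<le> t} \<in> sets (borel \<Otimes>\<^sub>M borel)" .
qed

lemma emeasure_U01_stoch_inv_le:
  assumes G1: "G_dist T a L x 1 = 1"
  shows "emeasure U01 {z. stoch_inv T a L x z \<le> t} = G_dist T a L x t"
proof -
  let ?g = "G_dist T a L x t"
  define Y where "Y = {z. stoch_inv T a L x z \<le> t}"
  have x: "x \<in> T ` part_set a L" using G1 image_part_set_if_G_dist[of x 1] by simp
  have "(\<lambda>z. stoch_inv T a L x z) \<in> borel_measurable borel"
    using measurable_compose[OF measurable_Pair1' borel_measurable_stoch_inv] by simp
  moreover have "Y = (\<lambda>z. stoch_inv T a L x z) -` {..t}" by (auto simp: Y_def)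
  ultimately have Y: "Y \<in> sets borel" using measurable_sets_borel[of _ borel "{..t}"] by simp
  have g: "0 \<le> ?g" "?g \<le> 1" using G_dist_nonneg G_dist_le_G_dist_1[of x t] G1 by auto
  have Y_Ioc: "z \<in> Y \<longleftrightarrow> z \<le> ?g" if "z \<in> {0<..1}" for z
    using that stoch_inv_le_iff[OF x] G1 by (simp add: Y_def)
  have "{0<..?g} \<subseteq> Y \<inter> {0..1}"
  proof
    fix z assume z: "z \<in> {0<..?g}"
    then have "z \<in> {0<..1}" using g by auto
    then show "z \<in> Y \<inter> {0..1}" using Y_Ioc z by auto
  qed
  then have lower: "ennreal ?g \<le> emeasure lborel (Y \<inter> {0..1})"
    using emeasure_mono[of "{0<..?g}" "Y \<inter> {0..1}" lborel] Y g by simp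
  have "Y \<inter> {0..1} \<subseteq> {0..?g}"
  proof
    fix z assume z: "z \<in> Y \<inter> {0..1}"
    show "z \<in> {0..?g}"
    proof (cases "z = 0")
      case False
      then have "z \<in> {0<..1}" using z by auto
      then show ?thesis using Y_Ioc z by auto
    qed (use g in auto)
  qed
  then have upper: "emeasure lborel (Y \<inter> {0..1}) \<le> ennreal ?g"
    using emeasure_mono[of "Y \<inter> {0..1}" "{0..?g}" lborel] g by simp
  have "emeasure U01 Y = emeasure lborel (Y \<inter> {0..1})" by (rule emeasure_U01[OF Y])
  also have "\<dots> = ennreal ?g" using lower upper by (rule antisym[rotated])
  finally show ?thesis by (simp add: Y_def)
qed

lemma distr_stoch_inv_U01:
  "distr (U01 \<Otimes>\<^sub>M U01) borel (\<lambda>p. stoch_inv T a L (fst p) (snd p)) = U01"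
proof (rule cdf_unique)
  let ?F = "\<lambda>p. stoch_inv T a L (fst p) (snd p)"
  interpret U01: prob_space U01 by (rule prob_space_U01)
  interpret U01_pair: prob_space "U01 \<Otimes>\<^sub>M U01"
    by (rule prob_space_pair[OF prob_space_U01 prob_space_U01])
  have F: "?F \<in> borel_measurable (U01 \<Otimes>\<^sub>M U01)"
    using borel_measurable_stoch_inv
    by (simp add: measurable_cong_sets[OF sets_pair_measure_cong[OF sets_U01 sets_U01] refl])
  show "real_distribution (distr (U01 \<Otimes>\<^sub>M U01) borel ?F)"
    using F by (rule U01_pair.real_distribution_distr)
  show "real_distribution U01"
    using prob_space_U01 by (simp add: real_distribution_def real_distribution_axioms_def)
  show "cdf (distr (U01 \<Otimes>\<^sub>M U01) borel ?F) = cdf U01"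
  proof
    fix t
    have "emeasure (distr (U01 \<Otimes>\<^sub>M U01) borel ?F) {..t} = emeasure (U01 \<Otimes>\<^sub>M U01) (?F -` {..t})"
      using F by (simp add: emeasure_distr space_pair_measure)
    also have "\<dots> = (\<integral>\<^sup>+x. emeasure U01 {z. stoch_inv T a L x z \<le> t} \<partial>U01)"
      using measurable_sets[OF F, of "{..t}"]
      by (simp add: U01.emeasure_pair_measure_alt space_pair_measure vimage_def)
    also have "\<dots> = (\<integral>\<^sup>+x. ennreal (G_dist T a L x t) \<partial>U01)"
      using AE_G_dist_1 by (intro nn_integral_cong_AE) (auto elim!: eventually_mono
          simp: emeasure_U01_stoch_inv_le)
    also have "\<dots> = (\<integral>\<^sup>+x. ennreal (G_dist T a L x t) * indicator {0..1} x \<partial>lborel)"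
      unfolding U01_def by (simp add: nn_integral_uniform_measure divide_ennreal_def)
    also have "\<dots> = emeasure lborel {u \<in> {0..1}. u \<le> t \<and> T u \<in> {0..1}}"
      by (rule nn_integral_G_dist) simp
    also have "\<dots> = emeasure U01 {..t}"
    proof -
      have "{u \<in> {0..1}. u \<le> t \<and> T u \<in> {0..1}} = {..t} \<inter> {0..1}"
        using udp by (auto simp: udp_def)
      then show ?thesis by (simp add: emeasure_U01)
    qed
    finally show "cdf (distr (U01 \<Otimes>\<^sub>M U01) borel ?F) t = cdf U01 t"
      by (simp add: cdf_def measure_def)
  qed
qed

end

theorem theorem2:
  fixes M :: "'a measure" and T :: "real \<Rightarrow> real" and a :: "nat \<Rightarrow> real" and L :: nat
    and V Z :: "'a \<Rightarrow> real"
  assumes "prob_space M"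
    and "regular_udp T" and "regular_partition T a L"
    and "V \<in> borel_measurable M" and "Z \<in> borel_measurable M"
    and "distr M borel V = U01" and "distr M borel Z = U01"
    and "prob_space.indep_var M borel V borel Z"
  shows "distr M borel (\<lambda>\<omega>. stoch_inv T a L (V \<omega>) (Z \<omega>)) = U01"
proof -
  interpret M: prob_space M by fact
  interpret regular_udp_partition T a L
    using assms(2,3) by unfold_locales (auto simp: regular_udp_def)
  have VZ: "(\<lambda>\<omega>. (V \<omega>, Z \<omega>)) \<in> measurable M (borel \<Otimes>\<^sub>M borel)"
    using assms(4,5) by measurable
  have joint: "distr M (borel \<Otimes>\<^sub>M borel) (\<lambda>\<omega>. (V \<omega>, Z \<omega>)) = U01 \<Otimes>\<^sub>M U01"
    using assms(8) by (simp add: M.indep_var_distribution_eq assms(6,7))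
  have "distr M borel (\<lambda>\<omega>. stoch_inv T a L (V \<omega>) (Z \<omega>)) =
      distr (distr M (borel \<Otimes>\<^sub>M borel) (\<lambda>\<omega>. (V \<omega>, Z \<omega>))) borel
        (\<lambda>p. stoch_inv T a L (fst p) (snd p))"
    using distr_distr[OF borel_measurable_stoch_inv VZ] by (simp add: comp_def)
  also have "\<dots> = U01"
    unfolding joint by (rule distr_stoch_inv_U01)
  finally show ?thesis .
qed

end
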